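(* Let $G$ be a graph such that each block of $G$ has a $(w,p)$-good tree decomposition. Then $G$ has a $(w,p+1)$-good tree decomposition.
   Context: A block of $G$ is a maximal 2-connected subgraph, the subgraph induced by the endpoints of a bridge, or the subgraph induced by an isolated vertex. A tree decomposition of $G$ is a family $(B_x\subseteq V(G): x\in V(T))$ indexed by the nodes of a tree $T$ such that each edge of $G$ has both endpoints in some bag and, for each $v\in V(G)$, the nodes $x$ with $v\in B_x$ induce a non-empty connected subtree $T[v]$ of $T$; its width is the maximum bag size minus 1. Pathwidth $\operatorname{pw}$ is the minimum width of a tree decomposition indexed by a path. A tree decomposition is $(w,p)$-good if its width is at most $w$ and $\operatorname{pw}(T[v])\le p$ for every $v\in V(G)$. *)

theory Defs
  imports Main
begin

definition is_graph :: "'a set \<Rightarrow> ('a \<Rightarrow> 'a \<Rightarrow> bool) \<Rightarrow> bool" where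
  "is_graph V E \<longleftrightarrow> finite V \<and>
     (\<forall>x y. E x y \<longrightarrow> x \<in> V \<and> y \<in> V \<and> x \<noteq> y \<and> E y x)"

definition induced :: "('a \<Rightarrow> 'a \<Rightarrow> bool) \<Rightarrow> 'a set \<Rightarrow> 'a \<Rightarrow> 'a \<Rightarrow> bool" where
  "induced E S = (\<lambda>x y. E x y \<and> x \<in> S \<and> y \<in> S)"

definition connected_graph :: "'a set \<Rightarrow> ('a \<Rightarrow> 'a \<Rightarrow> bool) \<Rightarrow> bool" where
  "connected_graph V E \<longleftrightarrow> (\<forall>x\<in>V. \<forall>y\<in>V. (induced E V)\<^sup>*\<^sup>* x y)"

definition del_edge :: "('a \<Rightarrow> 'a \<Rightarrow> bool) \<Rightarrow> 'a \<Rightarrow> 'a \<Rightarrow> 'a \<Rightarrow> 'a \<Rightarrow> bool" where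
  "del_edge E x y = (\<lambda>a b. E a b \<and> {a, b} \<noteq> {x, y})"

definition is_tree :: "'a set \<Rightarrow> ('a \<Rightarrow> 'a \<Rightarrow> bool) \<Rightarrow> bool" where
  "is_tree N F \<longleftrightarrow> is_graph N F \<and> N \<noteq> {} \<and> connected_graph N F \<and>
     (\<forall>x y. F x y \<longrightarrow> \<not> connected_graph N (del_edge F x y))"

definition is_path :: "'a set \<Rightarrow> ('a \<Rightarrow> 'a \<Rightarrow> bool) \<Rightarrow> bool" where
  "is_path N F \<longleftrightarrow> is_tree N F \<and> (\<forall>x\<in>N. card {y. F x y} \<le> 2)"

text \<open>Nodes of the tree whose bag contains v (the node set of T[v]).\<close>
definition bag_nodes :: "'b set \<Rightarrow> ('b \<Rightarrow> 'a set) \<Rightarrow> 'a \<Rightarrow> 'b set" where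
  "bag_nodes N B v = {x \<in> N. v \<in> B x}"

definition tree_decomp ::
  "'a set \<Rightarrow> ('a \<Rightarrow> 'a \<Rightarrow> bool) \<Rightarrow> 'b set \<Rightarrow> ('b \<Rightarrow> 'b \<Rightarrow> bool) \<Rightarrow> ('b \<Rightarrow> 'a set) \<Rightarrow> bool" where
  "tree_decomp V E N F B \<longleftrightarrow> is_tree N F \<and> (\<forall>x\<in>N. B x \<subseteq> V) \<and>
     (\<forall>u v. E u v \<longrightarrow> (\<exists>x\<in>N. u \<in> B x \<and> v \<in> B x)) \<and>
     (\<forall>v\<in>V. bag_nodes N B v \<noteq> {} \<and> connected_graph (bag_nodes N B v) (induced F (bag_nodes N B v)))"

definition width_le :: "'b set \<Rightarrow> ('b \<Rightarrow> 'a set) \<Rightarrow> nat \<Rightarrow> bool" where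
  "width_le N B w \<longleftrightarrow> (\<forall>x\<in>N. card (B x) \<le> w + 1)"

text \<open>pw(V,E) \<le> p: there is a tree decomposition indexed by a path of width at most p
(the indexing path is taken, w.l.o.g., on natural-number nodes).\<close>
definition pw_le :: "'a set \<Rightarrow> ('a \<Rightarrow> 'a \<Rightarrow> bool) \<Rightarrow> nat \<Rightarrow> bool" where
  "pw_le V E p \<longleftrightarrow> (\<exists>(P::nat set) Q C. is_path P Q \<and> tree_decomp V E P Q C \<and> width_le P C p)"

definition good_decomp ::
  "'a set \<Rightarrow> ('a \<Rightarrow> 'a \<Rightarrow> bool) \<Rightarrow> nat \<Rightarrow> nat \<Rightarrow> 'b set \<Rightarrow> ('b \<Rightarrow> 'b \<Rightarrow> bool) \<Rightarrow> ('b \<Rightarrow> 'a set) \<Rightarrow> bool" where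
  "good_decomp V E w p N F B \<longleftrightarrow> tree_decomp V E N F B \<and> width_le N B w \<and>
     (\<forall>v\<in>V. pw_le (bag_nodes N B v) (induced F (bag_nodes N B v)) p)"

text \<open>G has a (w,p)-good tree decomposition (tree nodes taken, w.l.o.g., to be naturals).\<close>
definition has_good_decomp :: "'a set \<Rightarrow> ('a \<Rightarrow> 'a \<Rightarrow> bool) \<Rightarrow> nat \<Rightarrow> nat \<Rightarrow> bool" where
  "has_good_decomp V E w p \<longleftrightarrow> (\<exists>(N::nat set) F B. good_decomp V E w p N F B)"

definition two_connected :: "'a set \<Rightarrow> ('a \<Rightarrow> 'a \<Rightarrow> bool) \<Rightarrow> bool" where
  "two_connected V E \<longleftrightarrow> card V \<ge> 3 \<and> connected_graph V E \<and>
     (\<forall>x\<in>V. connected_graph (V - {x}) (induced E (V - {x})))"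

definition is_block :: "'a set \<Rightarrow> ('a \<Rightarrow> 'a \<Rightarrow> bool) \<Rightarrow> 'a set \<Rightarrow> bool" where
  "is_block V E S \<longleftrightarrow> S \<subseteq> V \<and>
     ((two_connected S (induced E S) \<and>
        (\<forall>S'. S \<subset> S' \<and> S' \<subseteq> V \<longrightarrow> \<not> two_connected S' (induced E S'))) \<or>
      (\<exists>u v. S = {u, v} \<and> E u v \<and> \<not> connected_graph V (del_edge E u v)) \<or>
      (\<exists>v. S = {v} \<and> (\<forall>u. \<not> E v u)))"

end

theory Submission
  imports Defs
begin

(* Induction on the number of vertices, carrying a set R of at most one root: a vertex that is not
   a cut vertex and whose subtree T[r] must even have pathwidth at most p. A graph that is not a
   single block splits, at a component or at a cut vertex c, into two smaller induced subgraphs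
   G[A] and G[C] sharing at most c, whose blocks are blocks of G; C is chosen to avoid the root
   and is decomposed with root c. The two decompositions are joined by an edge between nodes whose
   bags contain c. Every vertex other than c keeps its subtree, while T[c] becomes T_A[c] joined to
   T_C[c]: concatenating a path decomposition of T_A[c] of width p + 1 with one of T_C[c] of
   width p, in which every bag is enlarged by a node x of a nonempty end bag of the former, shows
   that T[c] has pathwidth at most p + 1. *)

section \<open>Connectivity\<close>

lemma rtranclp_map:
  assumes "R\<^sup>*\<^sup>* a b" and "\<And>x y. R x y \<Longrightarrow> g x = g y \<or> R' (g x) (g y)"
  shows "R'\<^sup>*\<^sup>* (g a) (g b)"
  using assms(1)
proof (induction rule: rtranclp_induct)
  case (step y z)
  then show ?case using assms(2) by (metis rtranclp.rtrancl_into_rtrancl)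
qed simp

lemma is_graph_edgeD: "is_graph N F \<Longrightarrow> F a b \<Longrightarrow> a \<in> N \<and> b \<in> N \<and> a \<noteq> b \<and> F b a"
  unfolding is_graph_def by blast

lemma is_graph_symp: "is_graph N F \<Longrightarrow> symp F"
  unfolding is_graph_def symp_def by blast

lemma finite_neighbours: "is_graph N F \<Longrightarrow> finite {z. F a z}"
  unfolding is_graph_def by (metis (mono_tags, lifting) mem_Collect_eq rev_finite_subset subsetI)

lemma is_graph_induced: "is_graph V E \<Longrightarrow> A \<subseteq> V \<Longrightarrow> is_graph A (induced E A)"
  unfolding is_graph_def induced_def by (auto intro: finite_subset)

lemma induced_eq_self: "is_graph V E \<Longrightarrow> induced E V = E"
  unfolding is_graph_def induced_def by (auto intro!: ext)

lemma induced_induced [simp]: "S \<subseteq> A \<Longrightarrow> induced (induced E A) S = induced E S"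
  unfolding induced_def by (auto intro!: ext)

lemma symp_induced: "symp E \<Longrightarrow> symp (induced E W)"
  unfolding symp_def induced_def by blast

lemma connected_graph_induced [simp]:
  assumes "X \<subseteq> Y"
  shows "connected_graph X (induced R Y) = connected_graph X R"
proof -
  have "induced (induced R Y) X = induced R X" using assms unfolding induced_def by (auto intro!: ext)
  then show ?thesis unfolding connected_graph_def by simp
qed

lemma rtranclp_induced_mono:
  assumes "(induced R X)\<^sup>*\<^sup>* a b" "X \<subseteq> Y" "\<And>a b. a \<in> X \<Longrightarrow> b \<in> X \<Longrightarrow> R a b \<Longrightarrow> S a b"
  shows "(induced S Y)\<^sup>*\<^sup>* a b"
proof -
  have "induced R X \<le> induced S Y" using assms(2,3) unfolding induced_def by auto
  then show ?thesis using assms(1) by (meson rtranclp_mono predicate2D)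
qed

lemma connected_graph_mono:
  assumes "connected_graph X R" and "\<And>a b. a \<in> X \<Longrightarrow> b \<in> X \<Longrightarrow> R a b \<Longrightarrow> S a b"
  shows "connected_graph X S"
  using assms rtranclp_induced_mono[of R X _ _ X S] unfolding connected_graph_def by blast

lemma connected_graph_Un:
  assumes "connected_graph X1 R" "connected_graph X2 R" "a \<in> X1" "b \<in> X2" "R a b" "R b a"
  shows "connected_graph (X1 \<union> X2) R"
  unfolding connected_graph_def
proof (intro ballI)
  fix u v assume u: "u \<in> X1 \<union> X2" and v: "v \<in> X1 \<union> X2"
  let ?R = "induced R (X1 \<union> X2)"
  have "?R\<^sup>*\<^sup>* s t" if "s \<in> X1" "t \<in> X1" for s t
    using assms(1) that by (auto simp: connected_graph_def elim!: rtranclp_induced_mono)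
  moreover have "?R\<^sup>*\<^sup>* s t" if "s \<in> X2" "t \<in> X2" for s t
    using assms(2) that by (auto simp: connected_graph_def elim!: rtranclp_induced_mono)
  moreover have "?R\<^sup>*\<^sup>* a b" "?R\<^sup>*\<^sup>* b a" using assms(3-6) unfolding induced_def by auto
  ultimately show "?R\<^sup>*\<^sup>* u v" using u v assms(3,4)
    by (metis (no_types, lifting) Un_iff rtranclp_trans)
qed

lemma connected_graph_neighbour:
  assumes "connected_graph A R" "a \<in> A" "b \<in> A" "a \<noteq> b"
  obtains t where "t \<in> A" "R a t"
proof -
  have "(induced R A)\<^sup>*\<^sup>* a b" using assms unfolding connected_graph_def by blast
  then obtain t where "induced R A a t" using assms(4) by (metis converse_rtranclpE)
  then show ?thesis using that unfolding induced_def by blast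
qed

lemma connected_graph_del_edge:
  assumes g: "is_graph N F" and conn: "connected_graph N F"
    and cycle: "(induced (del_edge F a b) N)\<^sup>*\<^sup>* a b"
  shows "connected_graph N (del_edge F a b)"
  unfolding connected_graph_def
proof (intro ballI)
  let ?D = "induced (del_edge F a b) N"
  have "symp ?D"
    using is_graph_symp[OF g] unfolding symp_def induced_def del_edge_def by (auto simp: insert_commute)
  then have cycle_rev: "?D\<^sup>*\<^sup>* b a" using cycle by (metis sympD symp_rtranclp)
  have step: "?D\<^sup>*\<^sup>* s t" if "induced F N s t" for s t
  proof (cases "{s, t} = {a, b}")
    case True
    then show ?thesis using cycle cycle_rev by (metis doubleton_eq_iff)
  next
    case False
    then show ?thesis using that unfolding induced_def del_edge_def by auto
  qed
  fix u v assume "u \<in> N" "v \<in> N"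
  then have "(induced F N)\<^sup>*\<^sup>* u v" using conn unfolding connected_graph_def by blast
  then show "?D\<^sup>*\<^sup>* u v"
    by (induction rule: rtranclp_induct) (use step in \<open>auto intro: rtranclp_trans\<close>)
qed

definition component :: "'a set \<Rightarrow> ('a \<Rightarrow> 'a \<Rightarrow> bool) \<Rightarrow> 'a \<Rightarrow> 'a set" where
  "component V E x = {z \<in> V. (induced E V)\<^sup>*\<^sup>* x z}"

lemma component_subset: "component V E x \<subseteq> V"
  unfolding component_def by blast

lemma self_in_component: "x \<in> V \<Longrightarrow> x \<in> component V E x"
  unfolding component_def by simp

lemma component_closed:
  assumes "a \<in> component V E x" "E a b" "b \<in> V"
  shows "b \<in> component V E x"
  using assms unfolding component_def induced_def
  by (auto intro: rtranclp.rtrancl_into_rtrancl)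

lemma component_disjoint:
  assumes "symp E" "\<not> (induced E V)\<^sup>*\<^sup>* x y"
  shows "component V E x \<inter> component V E y = {}"
proof -
  have "(induced E V)\<^sup>*\<^sup>* z y" if "(induced E V)\<^sup>*\<^sup>* y z" for z
    using that symp_induced[OF assms(1)] by (metis sympD symp_rtranclp)
  then show ?thesis using assms(2) unfolding component_def by (blast intro: rtranclp_trans)
qed

lemma connected_component:
  assumes "symp E"
  shows "connected_graph (component V E x) E"
proof -
  let ?K = "component V E x"
  have reach: "(induced E ?K)\<^sup>*\<^sup>* x u" if "u \<in> ?K" for u
  proof -
    have "(induced E V)\<^sup>*\<^sup>* x u" using that unfolding component_def by blast
    then show ?thesis
    proof (induction rule: rtranclp_induct)
      case (step s t)
      then have "s \<in> ?K" "t \<in> ?K" unfolding component_def induced_def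
        by (auto intro: rtranclp.rtrancl_into_rtrancl)
      then have "induced E ?K s t" using step(2) unfolding induced_def by auto
      then show ?case using step.IH by (meson rtranclp.rtrancl_into_rtrancl)
    qed simp
  qed
  have "(induced E ?K)\<^sup>*\<^sup>* u x" if "u \<in> ?K" for u
    using reach[OF that] symp_induced[OF assms] by (metis sympD symp_rtranclp)
  then show ?thesis unfolding connected_graph_def using reach by (blast intro: rtranclp_trans)
qed

text \<open>The vertex c is irrelevant when A and C are disjoint.\<close>

definition separation :: "'a set \<Rightarrow> ('a \<Rightarrow> 'a \<Rightarrow> bool) \<Rightarrow> 'a set \<Rightarrow> 'a set \<Rightarrow> 'a \<Rightarrow> bool" where
  "separation V E A C c \<longleftrightarrow> V = A \<union> C \<and> A \<inter> C \<subseteq> {c} \<and>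
     (\<forall>a b. E a b \<longrightarrow> a \<in> A \<and> b \<in> A \<or> a \<in> C \<and> b \<in> C)"

lemma separation_commute: "separation V E A C c \<longleftrightarrow> separation V E C A c"
  unfolding separation_def by blast

lemma separation_mono: "separation V E A C c \<Longrightarrow> (\<And>a b. R a b \<Longrightarrow> E a b) \<Longrightarrow> separation V R A C c"
  unfolding separation_def by blast

lemma separation_disjoint: "separation V E A C c \<Longrightarrow> A \<inter> C = {} \<Longrightarrow> separation V E A C c'"
  unfolding separation_def by blast

lemma separation_card_Int: "separation V E A C c \<Longrightarrow> card (A \<inter> C) \<le> 1"
  unfolding separation_def by (auto dest!: subset_singletonD)

lemma connected_graph_separation:
  assumes conn: "connected_graph V R" and sep: "separation V R A C c" and c: "c \<in> A"
  shows "connected_graph A R"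
  unfolding connected_graph_def
proof (intro ballI)
  fix u v assume uv: "u \<in> A" "v \<in> A"
  define g where "g z = (if z \<in> A then z else c)" for z
  have "(induced R V)\<^sup>*\<^sup>* u v" using conn uv sep unfolding connected_graph_def separation_def by blast
  then have "(induced R A)\<^sup>*\<^sup>* (g u) (g v)"
  proof (rule rtranclp_map)
    fix s t assume "induced R V s t"
    then have "R s t" "s \<in> A \<and> t \<in> A \<or> s \<in> C \<and> t \<in> C"
      using sep unfolding induced_def separation_def by auto
    then show "g s = g t \<or> induced R A (g s) (g t)"
      using sep unfolding g_def induced_def separation_def by auto
  qed
  then show "(induced R A)\<^sup>*\<^sup>* u v" using uv unfolding g_def by simp
qed

lemma connected_graph_separation_subset:
  assumes sep: "separation V E A C c" and conn: "connected_graph D E"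
    and avoid: "D \<inter> (A \<inter> C) = {}" and s: "s \<in> D" "s \<in> A"
  shows "D \<subseteq> A"
proof
  fix z assume "z \<in> D"
  then have "(induced E D)\<^sup>*\<^sup>* s z" using conn s unfolding connected_graph_def by blast
  then have "z \<in> A - C"
  proof (induction rule: rtranclp_induct)
    case (step a b)
    then show ?case using sep avoid unfolding induced_def separation_def by blast
  qed (use s avoid in blast)
  then show "z \<in> A" by blast
qed

section \<open>Trees and paths\<close>

lemma is_treeD:
  assumes "is_tree N F"
  shows "is_graph N F" "N \<noteq> {}" "connected_graph N F"
    and "F a b \<Longrightarrow> \<not> connected_graph N (del_edge F a b)"
  using assms unfolding is_tree_def by blast+

lemma is_pathD:
  assumes "is_path N F"
  shows "is_tree N F" "is_graph N F" "x \<in> N \<Longrightarrow> card {y. F x y} \<le> 2"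
  using assms is_treeD(1) unfolding is_path_def by blast+

definition edge_join :: "('b \<Rightarrow> 'b \<Rightarrow> bool) \<Rightarrow> ('b \<Rightarrow> 'b \<Rightarrow> bool) \<Rightarrow> 'b \<Rightarrow> 'b \<Rightarrow> 'b \<Rightarrow> 'b \<Rightarrow> bool" where
  "edge_join F1 F2 x y = (\<lambda>a b. F1 a b \<or> F2 a b \<or> (a = x \<and> b = y) \<or> (a = y \<and> b = x))"

lemma edge_join_commute: "edge_join F1 F2 x y = edge_join F2 F1 y x"
  unfolding edge_join_def by (auto intro!: ext)

lemma edge_join_del_edge_not_connected:
  assumes t1: "is_tree N1 F1" and t2: "is_tree N2 F2" and d: "N1 \<inter> N2 = {}"
    and x: "x \<in> N1" and y: "y \<in> N2" and e: "F1 a b"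
  shows "\<not> connected_graph (N1 \<union> N2) (del_edge (edge_join F1 F2 x y) a b)"
proof
  assume c: "connected_graph (N1 \<union> N2) (del_edge (edge_join F1 F2 x y) a b)"
  define g where "g z = (if z \<in> N1 then z else x)" for z
  have "connected_graph N1 (del_edge F1 a b)"
    unfolding connected_graph_def
  proof (intro ballI)
    fix u v assume u: "u \<in> N1" and v: "v \<in> N1"
    have "(induced (del_edge (edge_join F1 F2 x y) a b) (N1 \<union> N2))\<^sup>*\<^sup>* u v"
      using c u v unfolding connected_graph_def by blast
    then have "(induced (del_edge F1 a b) N1)\<^sup>*\<^sup>* (g u) (g v)"
    proof (rule rtranclp_map)
      fix s t assume "induced (del_edge (edge_join F1 F2 x y) a b) (N1 \<union> N2) s t"
      then have st: "F1 s t \<or> F2 s t \<or> (s = x \<and> t = y) \<or> (s = y \<and> t = x)" and "{s, t} \<noteq> {a, b}"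
        unfolding induced_def del_edge_def edge_join_def by auto
      show "g s = g t \<or> induced (del_edge F1 a b) N1 (g s) (g t)"
      proof (cases "F1 s t")
        case True
        then have "s \<in> N1" "t \<in> N1" using is_graph_edgeD[OF is_treeD(1)[OF t1]] by blast+
        then show ?thesis using True \<open>{s, t} \<noteq> {a, b}\<close> unfolding g_def induced_def del_edge_def by auto
      next
        case False
        then have "s \<notin> N1 \<and> t \<notin> N1 \<or> (s = x \<and> t = y) \<or> (s = y \<and> t = x)"
          using st is_graph_edgeD[OF is_treeD(1)[OF t2], of s t] d by blast
        then show ?thesis using x y d unfolding g_def by auto
      qed
    qed
    then show "(induced (del_edge F1 a b) N1)\<^sup>*\<^sup>* u v" using u v unfolding g_def by simp
  qed
  then show False using is_treeD(4)[OF t1 e] by blast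
qed

lemma edge_join_del_link_not_connected:
  assumes g1: "is_graph N1 F1" and g2: "is_graph N2 F2" and d: "N1 \<inter> N2 = {}"
    and x: "x \<in> N1" and y: "y \<in> N2"
  shows "\<not> connected_graph (N1 \<union> N2) (del_edge (edge_join F1 F2 x y) x y)"
proof
  let ?D = "induced (del_edge (edge_join F1 F2 x y) x y) (N1 \<union> N2)"
  have side: "z \<in> N1" if "?D\<^sup>*\<^sup>* x z" for z
    using that
  proof (induction rule: rtranclp_induct)
    case (step s t)
    then have "F1 s t \<or> F2 s t"
      unfolding induced_def del_edge_def edge_join_def by (auto simp: insert_commute)
    then show ?case using step.IH is_graph_edgeD[OF g1] is_graph_edgeD[OF g2] d by blast
  qed (rule x)
  assume "connected_graph (N1 \<union> N2) (del_edge (edge_join F1 F2 x y) x y)"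
  then have "?D\<^sup>*\<^sup>* x y" using x y unfolding connected_graph_def by blast
  then show False using side y d by blast
qed

lemma is_tree_edge_join:
  assumes t1: "is_tree N1 F1" and t2: "is_tree N2 F2" and d: "N1 \<inter> N2 = {}"
    and x: "x \<in> N1" and y: "y \<in> N2"
  shows "is_tree (N1 \<union> N2) (edge_join F1 F2 x y)"
proof -
  let ?F = "edge_join F1 F2 x y"
  have g1: "is_graph N1 F1" and g2: "is_graph N2 F2" using t1 t2 is_treeD(1) by blast+
  have "x \<noteq> y" using x y d by blast
  then have "is_graph (N1 \<union> N2) ?F"
    using g1 g2 x y unfolding is_graph_def edge_join_def by auto
  moreover have "connected_graph (N1 \<union> N2) ?F"
  proof (rule connected_graph_Un)
    show "connected_graph N1 ?F" by (rule connected_graph_mono[OF is_treeD(3)[OF t1]]) (simp add: edge_join_def)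
    show "connected_graph N2 ?F" by (rule connected_graph_mono[OF is_treeD(3)[OF t2]]) (simp add: edge_join_def)
  qed (use x y in \<open>auto simp: edge_join_def\<close>)
  moreover have "\<not> connected_graph (N1 \<union> N2) (del_edge ?F a b)" if e: "?F a b" for a b
  proof -
    consider "F1 a b" | "F2 a b" | "{a, b} = {x, y}"
      using e unfolding edge_join_def by auto
    then show ?thesis
    proof cases
      case 1
      then show ?thesis using edge_join_del_edge_not_connected[OF t1 t2 d x y] by blast
    next
      case 2
      then show ?thesis using edge_join_del_edge_not_connected[OF t2 t1 _ y x, of a b] d
        by (simp add: edge_join_commute Un_commute Int_commute)
    next
      case 3
      then have "del_edge ?F a b = del_edge ?F x y" unfolding del_edge_def by simp
      then show ?thesis using edge_join_del_link_not_connected[OF g1 g2 d x y] by simp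
    qed
  qed
  ultimately show ?thesis unfolding is_tree_def using x by blast
qed

lemma is_path_edge_join:
  assumes p1: "is_path N1 F1" and p2: "is_path N2 F2" and d: "N1 \<inter> N2 = {}"
    and x: "x \<in> N1" and y: "y \<in> N2"
    and dx: "card {z. F1 x z} \<le> 1" and dy: "card {z. F2 y z} \<le> 1"
  shows "is_path (N1 \<union> N2) (edge_join F1 F2 x y)"
proof -
  have g1: "is_graph N1 F1" and g2: "is_graph N2 F2" using p1 p2 is_pathD(2) by blast+
  have "card {b. edge_join F1 F2 x y a b} \<le> 2" if a: "a \<in> N1 \<union> N2" for a
  proof (cases "a \<in> N1")
    case True
    have "{b. edge_join F1 F2 x y a b} = {b. F1 a b} \<union> (if a = x then {y} else {})"
      using True d is_graph_edgeD[OF g2, of a] x y unfolding edge_join_def by auto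
    then show ?thesis using dx finite_neighbours[OF g1, of a] is_pathD(3)[OF p1 True]
      by (cases "a = x") (auto simp: card_insert_if)
  next
    case False
    then have "a \<in> N2" using a by blast
    have "{b. edge_join F1 F2 x y a b} = {b. F2 a b} \<union> (if a = y then {x} else {})"
      using False is_graph_edgeD[OF g1, of a] x y unfolding edge_join_def by auto
    then show ?thesis using dy finite_neighbours[OF g2, of a] is_pathD(3)[OF p2 \<open>a \<in> N2\<close>]
      by (cases "a = y") (auto simp: card_insert_if)
  qed
  then show ?thesis
    unfolding is_path_def using is_tree_edge_join[OF is_pathD(1)[OF p1] is_pathD(1)[OF p2] d x y] by blast
qed

definition rel_image :: "('b \<Rightarrow> 'c) \<Rightarrow> 'b set \<Rightarrow> ('b \<Rightarrow> 'b \<Rightarrow> bool) \<Rightarrow> 'c \<Rightarrow> 'c \<Rightarrow> bool" where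
  "rel_image f N F = (\<lambda>a b. \<exists>x\<in>N. \<exists>y\<in>N. a = f x \<and> b = f y \<and> F x y)"

lemma connected_graph_rel_image:
  assumes "connected_graph X R"
  shows "connected_graph (f ` X) (rel_image f X R)"
  unfolding connected_graph_def
proof (intro ballI)
  fix a b assume "a \<in> f ` X" "b \<in> f ` X"
  then obtain u v where u: "u \<in> X" "a = f u" and v: "v \<in> X" "b = f v" by blast
  have "(induced R X)\<^sup>*\<^sup>* u v" using assms u v unfolding connected_graph_def by blast
  then have "(induced (rel_image f X R) (f ` X))\<^sup>*\<^sup>* (f u) (f v)"
    by (rule rtranclp_map) (auto simp: induced_def rel_image_def)
  then show "(induced (rel_image f X R) (f ` X))\<^sup>*\<^sup>* a b" using u v by simp
qed

lemma is_tree_rel_image: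
  assumes t: "is_tree N F" and inj: "inj_on f N"
  shows "is_tree (f ` N) (rel_image f N F)"
proof -
  have g: "is_graph N F" using t is_treeD(1) by blast
  have "\<not> connected_graph (f ` N) (del_edge (rel_image f N F) a b)" if e: "rel_image f N F a b" for a b
  proof
    assume c: "connected_graph (f ` N) (del_edge (rel_image f N F) a b)"
    obtain x y where xy: "x \<in> N" "y \<in> N" "a = f x" "b = f y" "F x y"
      using e unfolding rel_image_def by blast
    let ?g = "inv_into N f"
    have "connected_graph N (del_edge F x y)"
      unfolding connected_graph_def
    proof (intro ballI)
      fix u v assume u: "u \<in> N" and v: "v \<in> N"
      have "(induced (del_edge (rel_image f N F) a b) (f ` N))\<^sup>*\<^sup>* (f u) (f v)"
        using c u v unfolding connected_graph_def by blast
      then have "(induced (del_edge F x y) N)\<^sup>*\<^sup>* (?g (f u)) (?g (f v))"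
      proof (rule rtranclp_map)
        fix s t assume "induced (del_edge (rel_image f N F) a b) (f ` N) s t"
        then obtain s' t' where "s' \<in> N" "t' \<in> N" "s = f s'" "t = f t'" "F s' t'" "{s, t} \<noteq> {a, b}"
          unfolding induced_def del_edge_def rel_image_def by blast
        moreover have "{s', t'} \<noteq> {x, y}" using calculation xy by auto
        ultimately show "?g s = ?g t \<or> induced (del_edge F x y) N (?g s) (?g t)"
          using inj unfolding induced_def del_edge_def by auto
      qed
      then show "(induced (del_edge F x y) N)\<^sup>*\<^sup>* u v" using inj u v by simp
    qed
    then show False using is_treeD(4)[OF t xy(5)] by blast
  qed
  moreover have "is_graph (f ` N) (rel_image f N F)"
    using g inj unfolding is_graph_def rel_image_def inj_on_def by blast
  ultimately show ?thesis
    unfolding is_tree_def using connected_graph_rel_image is_treeD(2,3)[OF t] by blast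
qed

lemma rel_image_neighbours:
  assumes "inj_on f N" "x \<in> N" "is_graph N F"
  shows "{b. rel_image f N F (f x) b} = f ` {y. F x y}"
  using assms unfolding rel_image_def inj_on_def is_graph_def by blast

lemma card_rel_image_neighbours:
  assumes "inj_on f N" "x \<in> N" "is_graph N F"
  shows "card {b. rel_image f N F (f x) b} = card {y. F x y}"
proof -
  have "{y. F x y} \<subseteq> N" using assms(3) unfolding is_graph_def by blast
  then show ?thesis
    unfolding rel_image_neighbours[OF assms] by (rule card_image[OF inj_on_subset[OF assms(1)]])
qed

lemma is_path_rel_image:
  assumes p: "is_path N F" and inj: "inj_on f N"
  shows "is_path (f ` N) (rel_image f N F)"
  using is_tree_rel_image[OF is_pathD(1)[OF p] inj] is_pathD(3)[OF p]
    card_rel_image_neighbours[OF inj _ is_pathD(2)[OF p]]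
  unfolding is_path_def by auto

lemma induced_rel_image:
  assumes "inj_on f N" "X \<subseteq> N"
  shows "induced (rel_image f N F) (f ` X) = rel_image f X (induced F X)"
  using assms unfolding induced_def rel_image_def inj_on_def by (auto intro!: ext) blast+

lemma even_sum_degrees:
  fixes Q :: "'b::linorder \<Rightarrow> 'b \<Rightarrow> bool"
  assumes fin: "finite K" and sym: "symp Q" and irr: "\<And>a. \<not> Q a a"
  shows "even (\<Sum>z\<in>K. card {u\<in>K. Q z u})"
proof -
  define S where "S = (SIGMA z:K. {u\<in>K. Q z u})"
  define S1 where "S1 = {p\<in>S. fst p < snd p}"
  define S2 where "S2 = {p\<in>S. snd p < fst p}"
  have "finite S" unfolding S_def using fin by auto
  moreover have "S = S1 \<union> S2" "S1 \<inter> S2 = {}"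
    unfolding S1_def S2_def S_def using irr by (auto, metis linorder_neqE)
  ultimately have "card S = card S1 + card S2" by (simp add: card_Un_disjoint)
  moreover have "S2 = prod.swap ` S1"
    unfolding S1_def S2_def S_def using sym by (force simp: symp_def)
  then have "card S2 = card S1" by (simp add: card_image)
  moreover have "card S = (\<Sum>z\<in>K. card {u\<in>K. Q z u})" unfolding S_def using fin by simp
  ultimately show ?thesis by simp
qed

text \<open>In a graph with all degrees even, the component of a in G - ab would have odd degree sum
  if it missed b.\<close>

lemma rtranclp_del_edge_even_degrees:
  fixes F :: "'b::linorder \<Rightarrow> 'b \<Rightarrow> bool"
  assumes g: "is_graph N F" and even: "\<And>x. x \<in> N \<Longrightarrow> even (card {y. F x y})" and ab: "F a b"
  shows "(induced (del_edge F a b) N)\<^sup>*\<^sup>* a b"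
proof (rule ccontr)
  assume nab: "\<not> (induced (del_edge F a b) N)\<^sup>*\<^sup>* a b"
  define K where "K = component N (del_edge F a b) a"
  have a: "a \<in> N" "a \<noteq> b" using is_graph_edgeD[OF g ab] by blast+
  have aK: "a \<in> K" unfolding K_def by (rule self_in_component[OF a(1)])
  have bK: "b \<notin> K" using nab unfolding K_def component_def by blast
  have finK: "finite K" using g component_subset[of N _ a] unfolding K_def is_graph_def
    by (blast intro: finite_subset)
  have inK: "u \<in> K" if "z \<in> K" "F z u" "{z, u} \<noteq> {a, b}" for z u
    using that component_closed[of z N "del_edge F a b" a u] is_graph_edgeD[OF g that(2)]
    unfolding K_def del_edge_def by blast
  have deg_a: "{u\<in>K. F a u} = {u. F a u} - {b}"
    using inK[OF aK] bK by (auto simp: doubleton_eq_iff)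
  have deg_z: "{u\<in>K. F z u} = {u. F z u}" if "z \<in> K - {a}" for z
    using inK that bK by (auto simp: doubleton_eq_iff)
  have "odd (card {u\<in>K. F a u})"
  proof -
    have "card {u. F a u} > 0" using ab finite_neighbours[OF g, of a] card_gt_0_iff by blast
    then show ?thesis unfolding deg_a using even[OF a(1)] ab finite_neighbours[OF g, of a]
      by (auto simp: card_Diff_singleton even_diff_nat)
  qed
  moreover have "even (\<Sum>z\<in>K - {a}. card {u\<in>K. F z u})"
  proof (rule dvd_sum)
    fix z assume "z \<in> K - {a}"
    then show "even (card {u\<in>K. F z u})"
      using deg_z even component_subset[of N "del_edge F a b" a] unfolding K_def by auto
  qed
  ultimately have "odd (\<Sum>z\<in>K. card {u\<in>K. F z u})"
    using finK aK by (simp add: sum.remove)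
  moreover have "even (\<Sum>z\<in>K. card {u\<in>K. F z u})"
    using even_sum_degrees[OF finK is_graph_symp[OF g]] is_graph_edgeD[OF g] by blast
  ultimately show False by blast
qed

lemma path_has_endpoint:
  fixes P :: "'b::linorder set"
  assumes p: "is_path P Q"
  shows "\<exists>e\<in>P. card {z. Q e z} \<le> 1"
proof (rule ccontr)
  assume "\<not> ?thesis"
  then have deg2: "card {z. Q e z} = 2" if "e \<in> P" for e using is_pathD(3)[OF p that] that by force
  have t: "is_tree P Q" and g: "is_graph P Q" using p by (rule is_pathD)+
  obtain a where a: "a \<in> P" using is_treeD(2)[OF t] by blast
  then obtain b where ab: "Q a b" using deg2[OF a] by fastforce
  have "(induced (del_edge Q a b) P)\<^sup>*\<^sup>* a b"
    by (rule rtranclp_del_edge_even_degrees[OF g _ ab]) (simp add: deg2)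
  then have "connected_graph P (del_edge Q a b)"
    by (rule connected_graph_del_edge[OF g is_treeD(3)[OF t]])
  then show False using is_treeD(4)[OF t ab] by blast
qed

lemma connected_graph_Diff_pendant:
  assumes conn: "connected_graph P Q" and sym: "symp Q"
    and e: "e \<in> P" and j: "j \<in> P - {e}" and only: "\<And>z. Q e z \<Longrightarrow> z = j"
  shows "connected_graph (P - {e}) Q"
  unfolding connected_graph_def
proof (intro ballI)
  fix a b assume a: "a \<in> P - {e}" and b: "b \<in> P - {e}"
  define h where "h z = (if z = e then j else z)" for z
  have "(induced Q P)\<^sup>*\<^sup>* a b" using conn a b unfolding connected_graph_def by blast
  then have "(induced Q (P - {e}))\<^sup>*\<^sup>* (h a) (h b)"
  proof (rule rtranclp_map)
    fix s t assume st: "induced Q P s t"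
    show "h s = h t \<or> induced Q (P - {e}) (h s) (h t)"
    proof (cases "s = e \<or> t = e")
      case True
      then have "s = e \<and> t = j \<or> t = e \<and> s = j"
        using st only sym unfolding induced_def symp_def by blast
      then show ?thesis unfolding h_def by auto
    next
      case False
      then show ?thesis using st unfolding h_def induced_def by auto
    qed
  qed
  then show "(induced Q (P - {e}))\<^sup>*\<^sup>* a b" using a b unfolding h_def by auto
qed

lemma connected_graph_insert_pendant:
  assumes conn: "connected_graph (P - {e}) R" and sym: "symp R"
    and e: "e \<in> P" and j: "j \<in> P - {e}" "R e j"
  shows "connected_graph P R"
proof -
  have "(induced R P)\<^sup>*\<^sup>* z j" if "z \<in> P - {e}" for z
  proof (rule rtranclp_induced_mono)
    show "(induced R (P - {e}))\<^sup>*\<^sup>* z j" using conn that j(1) unfolding connected_graph_def by blast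
  qed auto
  moreover have "induced R P e j" using e j unfolding induced_def by blast
  ultimately have toj: "(induced R P)\<^sup>*\<^sup>* z j" if "z \<in> P" for z
    using that by blast
  then have fromj: "(induced R P)\<^sup>*\<^sup>* j z" if "z \<in> P" for z
    using toj[OF that] symp_induced[OF sym] by (metis sympD symp_rtranclp)
  show ?thesis unfolding connected_graph_def using toj fromj by (blast intro: rtranclp_trans)
qed

lemma is_tree_Diff_leaf:
  assumes t: "is_tree P Q" and e: "e \<in> P" and de: "card {z. Q e z} \<le> 1" and ne: "P \<noteq> {e}"
  shows "is_tree (P - {e}) (induced Q (P - {e}))"
proof -
  have g: "is_graph P Q" by (rule is_treeD(1)[OF t])
  obtain u where u: "u \<in> P" "u \<noteq> e" using ne e is_treeD(2)[OF t] by blast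
  obtain j where "j \<in> P" "Q e j" using connected_graph_neighbour[OF is_treeD(3)[OF t] e u(1)] u(2) by metis
  then have ej: "Q e j" "j \<in> P - {e}" using is_graph_edgeD[OF g] by blast+
  have only: "z = j" if "Q e z" for z
    using de finite_neighbours[OF g, of e] that ej(1) card_le_Suc0_iff_eq[of "{z. Q e z}"] by auto
  have conn: "connected_graph (P - {e}) Q"
    by (rule connected_graph_Diff_pendant[OF is_treeD(3)[OF t] is_graph_symp[OF g] e ej(2) only])
  have "\<not> connected_graph (P - {e}) (del_edge (induced Q (P - {e})) a b)"
    if ab: "induced Q (P - {e}) a b" for a b
  proof
    assume "connected_graph (P - {e}) (del_edge (induced Q (P - {e})) a b)"
    then have conn': "connected_graph (P - {e}) (del_edge Q a b)"
      by (rule connected_graph_mono) (simp add: del_edge_def induced_def)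
    have sym': "symp (del_edge Q a b)"
      using is_graph_symp[OF g] unfolding symp_def del_edge_def by (auto simp: insert_commute)
    have "del_edge Q a b e j" using ej ab unfolding del_edge_def induced_def by auto
    then have "connected_graph P (del_edge Q a b)"
      by (rule connected_graph_insert_pendant[OF conn' sym' e ej(2)])
    then show False using is_treeD(4)[OF t] ab unfolding induced_def by blast
  qed
  moreover have "is_graph (P - {e}) (induced Q (P - {e}))" by (rule is_graph_induced[OF g]) blast
  ultimately show ?thesis unfolding is_tree_def using conn ej(2) by auto
qed

lemma is_path_Diff_leaf:
  assumes p: "is_path P Q" and e: "e \<in> P" and de: "card {z. Q e z} \<le> 1" and ne: "P \<noteq> {e}"
  shows "is_path (P - {e}) (induced Q (P - {e}))"
proof -
  have "card {z. induced Q (P - {e}) a z} \<le> 2" if "a \<in> P - {e}" for a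
  proof -
    have "card {z. induced Q (P - {e}) a z} \<le> card {z. Q a z}"
      by (rule card_mono[OF finite_neighbours[OF is_pathD(2)[OF p]]]) (auto simp: induced_def)
    then show ?thesis using is_pathD(3)[OF p] that by fastforce
  qed
  then show ?thesis unfolding is_path_def using is_tree_Diff_leaf[OF is_pathD(1)[OF p] e de ne] by blast
qed

section \<open>Tree decompositions\<close>

lemma bag_nodes_subset: "bag_nodes N B v \<subseteq> N"
  unfolding bag_nodes_def by blast

lemma bag_nodes_empty: "tree_decomp V E N F B \<Longrightarrow> v \<notin> V \<Longrightarrow> bag_nodes N B v = {}"
  unfolding tree_decomp_def bag_nodes_def by blast

lemma tree_decomp_Diff_empty_bag:
  assumes td: "tree_decomp X Y P Q C" and t: "is_tree (P - {e}) (induced Q (P - {e}))" and Ce: "C e = {}"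
  shows "tree_decomp X Y (P - {e}) (induced Q (P - {e})) C"
  unfolding tree_decomp_def
proof (intro conjI ballI allI impI)
  have bn: "bag_nodes (P - {e}) C v = bag_nodes P C v" for v using Ce unfolding bag_nodes_def by auto
  show "is_tree (P - {e}) (induced Q (P - {e}))" by (rule t)
  show "C x \<subseteq> X" if "x \<in> P - {e}" for x using td that unfolding tree_decomp_def by blast
  show "\<exists>x\<in>P - {e}. u \<in> C x \<and> v \<in> C x" if "Y u v" for u v
    using td Ce that unfolding tree_decomp_def by fastforce
  fix v assume v: "v \<in> X"
  show "bag_nodes (P - {e}) C v \<noteq> {}" using td v unfolding tree_decomp_def bn by blast
  have "connected_graph (bag_nodes P C v) Q" using td v unfolding tree_decomp_def by simp
  then show "connected_graph (bag_nodes (P - {e}) C v) (induced (induced Q (P - {e})) (bag_nodes (P - {e}) C v))"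
    unfolding connected_graph_induced bn
    by (rule connected_graph_mono) (use Ce in \<open>auto simp: bag_nodes_def induced_def\<close>)
qed

lemma bag_nodes_rel_image:
  assumes "inj_on f N"
  shows "bag_nodes (f ` N) (B \<circ> inv_into N f) v = f ` bag_nodes N B v"
  using assms unfolding bag_nodes_def by force

lemma tree_decomp_rel_image:
  assumes td: "tree_decomp V E N F B" and inj: "inj_on f N"
  shows "tree_decomp V E (f ` N) (rel_image f N F) (B \<circ> inv_into N f)"
  unfolding tree_decomp_def
proof (intro conjI ballI allI impI)
  show "is_tree (f ` N) (rel_image f N F)"
    using td is_tree_rel_image[OF _ inj] unfolding tree_decomp_def by blast
  show "(B \<circ> inv_into N f) a \<subseteq> V" if "a \<in> f ` N" for a
    using td inj that unfolding tree_decomp_def by auto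
  show "\<exists>a\<in>f ` N. u \<in> (B \<circ> inv_into N f) a \<and> v \<in> (B \<circ> inv_into N f) a" if "E u v" for u v
  proof -
    obtain z where "z \<in> N" "u \<in> B z" "v \<in> B z" using td \<open>E u v\<close> unfolding tree_decomp_def by blast
    then show ?thesis using inj by (intro bexI[of _ "f z"]) auto
  qed
  fix v assume v: "v \<in> V"
  show "bag_nodes (f ` N) (B \<circ> inv_into N f) v \<noteq> {}"
    using td v unfolding tree_decomp_def bag_nodes_rel_image[OF inj] by blast
  have "connected_graph (bag_nodes N B v) (induced F (bag_nodes N B v))"
    using td v unfolding tree_decomp_def by blast
  then show "connected_graph (bag_nodes (f ` N) (B \<circ> inv_into N f) v)
      (induced (rel_image f N F) (bag_nodes (f ` N) (B \<circ> inv_into N f) v))"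
    unfolding bag_nodes_rel_image[OF inj] induced_rel_image[OF inj bag_nodes_subset]
    by (rule connected_graph_rel_image)
qed

lemma width_le_rel_image: "width_le N B w \<Longrightarrow> inj_on f N \<Longrightarrow> width_le (f ` N) (B \<circ> inv_into N f) w"
  unfolding width_le_def by auto

lemma tree_decomp_edgeD: "tree_decomp V E N F B \<Longrightarrow> E u v \<Longrightarrow> u \<in> V \<and> v \<in> V"
  unfolding tree_decomp_def by blast

lemma tree_decomp_mono:
  "tree_decomp V E N F B \<Longrightarrow> (\<And>u v. E' u v \<Longrightarrow> E u v) \<Longrightarrow> tree_decomp V E' N F B"
  unfolding tree_decomp_def by blast

lemma tree_decomp_insert:
  assumes td: "tree_decomp X Y P Q C"
    and edges: "\<And>u v. Y' u v \<Longrightarrow> Y u v \<or> (u = x \<and> v \<in> insert x X) \<or> (v = x \<and> u \<in> insert x X)"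
  shows "tree_decomp (insert x X) Y' P Q (\<lambda>z. insert x (C z))"
  unfolding tree_decomp_def
proof (intro conjI ballI allI impI)
  have t: "is_tree P Q" using td unfolding tree_decomp_def by blast
  show "is_tree P Q" by (rule t)
  show "insert x (C z) \<subseteq> insert x X" if "z \<in> P" for z using td that unfolding tree_decomp_def by blast
  have cover: "\<exists>z\<in>P. v \<in> C z" if "v \<in> X" for v
    using td that unfolding tree_decomp_def bag_nodes_def by blast
  show "\<exists>z\<in>P. u \<in> insert x (C z) \<and> v \<in> insert x (C z)" if "Y' u v" for u v
    using edges[OF that] td cover is_treeD(2)[OF t] unfolding tree_decomp_def by blast
  fix v assume v: "v \<in> insert x X"
  show "bag_nodes P (\<lambda>z. insert x (C z)) v \<noteq> {}"
    using v cover is_treeD(2)[OF t] unfolding bag_nodes_def by auto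
  show "connected_graph (bag_nodes P (\<lambda>z. insert x (C z)) v)
      (induced Q (bag_nodes P (\<lambda>z. insert x (C z)) v))"
  proof (cases "v = x")
    case True
    then have "bag_nodes P (\<lambda>z. insert x (C z)) v = P" unfolding bag_nodes_def by auto
    then show ?thesis using is_treeD(3)[OF t] by simp
  next
    case False
    then have "bag_nodes P (\<lambda>z. insert x (C z)) v = bag_nodes P C v" unfolding bag_nodes_def by auto
    then show ?thesis using td v False unfolding tree_decomp_def by auto
  qed
qed

lemma bag_nodes_if:
  assumes "N1 \<inter> N2 = {}"
  shows "bag_nodes (N1 \<union> N2) (\<lambda>z. if z \<in> N1 then B1 z else B2 z) v = bag_nodes N1 B1 v \<union> bag_nodes N2 B2 v"
  using assms unfolding bag_nodes_def by auto

lemma connected_bag_nodes_edge_join: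
  assumes td1: "tree_decomp A E1 N1 F1 B1" and td2: "tree_decomp C E2 N2 F2 B2"
    and x: "x \<in> N1" and y: "y \<in> N2"
    and v: "v \<in> A \<union> C" and link: "v \<in> A \<inter> C \<Longrightarrow> v \<in> B1 x \<and> v \<in> B2 y"
  shows "connected_graph (bag_nodes N1 B1 v \<union> bag_nodes N2 B2 v) (edge_join F1 F2 x y)"
proof -
  have conn1: "connected_graph (bag_nodes N1 B1 v) (edge_join F1 F2 x y)" if "v \<in> A"
    using td1 that unfolding tree_decomp_def by (auto elim!: connected_graph_mono simp: edge_join_def)
  have conn2: "connected_graph (bag_nodes N2 B2 v) (edge_join F1 F2 x y)" if "v \<in> C"
    using td2 that unfolding tree_decomp_def by (auto elim!: connected_graph_mono simp: edge_join_def)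
  show ?thesis
  proof (cases "v \<in> A \<inter> C")
    case True
    then have "x \<in> bag_nodes N1 B1 v" "y \<in> bag_nodes N2 B2 v"
      using link x y unfolding bag_nodes_def by auto
    then show ?thesis using connected_graph_Un[OF conn1 conn2] True by (auto simp: edge_join_def)
  next
    case False
    then show ?thesis
      using v conn1 conn2 bag_nodes_empty[OF td1, of v] bag_nodes_empty[OF td2, of v]
      by (cases "v \<in> A") auto
  qed
qed

lemma tree_decomp_edge_join:
  assumes sep: "separation V E A C c"
    and td1: "tree_decomp A (induced E A) N1 F1 B1" and td2: "tree_decomp C (induced E C) N2 F2 B2"
    and d: "N1 \<inter> N2 = {}" and x: "x \<in> N1" and y: "y \<in> N2"
    and cxy: "c \<in> A \<inter> C \<Longrightarrow> c \<in> B1 x \<and> c \<in> B2 y"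
  shows "tree_decomp V E (N1 \<union> N2) (edge_join F1 F2 x y) (\<lambda>z. if z \<in> N1 then B1 z else B2 z)"
  unfolding tree_decomp_def
proof (intro conjI ballI allI impI)
  let ?F = "edge_join F1 F2 x y" and ?B = "\<lambda>z. if z \<in> N1 then B1 z else B2 z"
  have t1: "is_tree N1 F1" and t2: "is_tree N2 F2" using td1 td2 unfolding tree_decomp_def by blast+
  show "is_tree (N1 \<union> N2) ?F" by (rule is_tree_edge_join[OF t1 t2 d x y])
  show "?B z \<subseteq> V" if "z \<in> N1 \<union> N2" for z
    using td1 td2 sep that unfolding tree_decomp_def separation_def by auto
  show "\<exists>z\<in>N1 \<union> N2. u \<in> ?B z \<and> v \<in> ?B z" if e: "E u v" for u v
  proof (cases "u \<in> A \<and> v \<in> A")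
    case True
    then have "induced E A u v" using e unfolding induced_def by blast
    then obtain z where "z \<in> N1" "u \<in> B1 z" "v \<in> B1 z" using td1 unfolding tree_decomp_def by blast
    then show ?thesis by (intro bexI[of _ z]) auto
  next
    case False
    then have "induced E C u v" using e sep unfolding induced_def separation_def by blast
    then obtain z where "z \<in> N2" "u \<in> B2 z" "v \<in> B2 z" using td2 unfolding tree_decomp_def by blast
    then show ?thesis using d by (intro bexI[of _ z]) auto
  qed
  fix v assume v: "v \<in> V"
  have "connected_graph (bag_nodes N1 B1 v \<union> bag_nodes N2 B2 v) ?F"
    using v sep cxy by (intro connected_bag_nodes_edge_join[OF td1 td2 x y]) (auto simp: separation_def)
  moreover have "bag_nodes N1 B1 v \<noteq> {} \<or> bag_nodes N2 B2 v \<noteq> {}"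
    using td1 td2 v sep unfolding tree_decomp_def separation_def by blast
  ultimately show "bag_nodes (N1 \<union> N2) ?B v \<noteq> {}"
    and "connected_graph (bag_nodes (N1 \<union> N2) ?B v) (induced ?F (bag_nodes (N1 \<union> N2) ?B v))"
    unfolding bag_nodes_if[OF d] by auto
qed

section \<open>Pathwidth\<close>

definition path_decomp ::
  "'a set \<Rightarrow> ('a \<Rightarrow> 'a \<Rightarrow> bool) \<Rightarrow> 'b set \<Rightarrow> ('b \<Rightarrow> 'b \<Rightarrow> bool) \<Rightarrow> ('b \<Rightarrow> 'a set) \<Rightarrow> nat \<Rightarrow> bool" where
  "path_decomp X Y P Q C k \<longleftrightarrow> is_path P Q \<and> tree_decomp X Y P Q C \<and> width_le P C k"

lemma pw_le_iff: "pw_le X Y k \<longleftrightarrow> (\<exists>(P::nat set) Q C. path_decomp X Y P Q C k)"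
  unfolding pw_le_def path_decomp_def by blast

lemma pw_le_Suc: "pw_le X Y k \<Longrightarrow> pw_le X Y (Suc k)"
  unfolding pw_le_def width_le_def by fastforce

lemma pw_le_mono: "pw_le X Y k \<Longrightarrow> (\<And>a b. Y' a b \<Longrightarrow> Y a b) \<Longrightarrow> pw_le X Y' k"
  unfolding pw_le_def tree_decomp_def by blast

lemma path_decomp_Diff_empty_leaf:
  assumes pd: "path_decomp X Y P Q C k"
    and e: "e \<in> P" "card {z. Q e z} \<le> 1" "C e = {}" and ne: "P \<noteq> {e}"
  shows "path_decomp X Y (P - {e}) (induced Q (P - {e})) C k"
proof -
  have p: "is_path (P - {e}) (induced Q (P - {e}))"
    using pd is_path_Diff_leaf[of P Q e] e(1,2) ne unfolding path_decomp_def by blast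
  then show ?thesis
    using tree_decomp_Diff_empty_bag[of X Y P Q C e] is_pathD(1)[OF p] e(3) pd
    unfolding path_decomp_def width_le_def by blast
qed

text \<open>Empty end bags can be removed until an end bag is nonempty.\<close>

lemma path_decomp_nonempty_end:
  fixes P :: "'b::linorder set"
  assumes "path_decomp X Y P Q C k" "X \<noteq> {}"
  shows "\<exists>(P'::'b set) Q' C' e. path_decomp X Y P' Q' C' k \<and> e \<in> P' \<and> card {z. Q' e z} \<le> 1 \<and> C' e \<noteq> {}"
  using assms
proof (induction "card P" arbitrary: P Q rule: less_induct)
  case less
  have p: "is_path P Q" using less.prems(1) unfolding path_decomp_def by blast
  obtain e where e: "e \<in> P" "card {z. Q e z} \<le> 1" using path_has_endpoint[OF p] by blast
  show ?case
  proof (cases "C e = {}")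
    case True
    have "P \<noteq> {e}"
    proof
      assume "P = {e}"
      moreover obtain v where "v \<in> X" using less.prems(2) by blast
      ultimately show False
        using less.prems(1) True unfolding path_decomp_def tree_decomp_def bag_nodes_def by auto
    qed
    moreover have "finite P" using is_pathD(2)[OF p] unfolding is_graph_def by blast
    ultimately show ?thesis
      using less.hyps[of "P - {e}"] path_decomp_Diff_empty_leaf[OF less.prems(1) e True] less.prems(2) e(1)
      by (meson card_Diff1_less)
  qed (use less.prems(1) e in blast)
qed

lemma path_decomp_rel_image:
  assumes "path_decomp X Y P Q C k" "inj_on f P"
  shows "path_decomp X Y (f ` P) (rel_image f P Q) (C \<circ> inv_into P f) k"
  using assms is_path_rel_image tree_decomp_rel_image width_le_rel_image
  unfolding path_decomp_def by blast

text \<open>x is added to every bag of the second decomposition so that the edge xy is covered.\<close>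

lemma path_decomp_edge_join:
  assumes pd1: "path_decomp X1 Y1 P1 Q1 C1 (Suc k)" and e1: "e1 \<in> P1" "card {z. Q1 e1 z} \<le> 1"
    and x: "x \<in> C1 e1"
    and pd2: "path_decomp X2 Y2 P2 Q2 C2 k" and e2: "e2 \<in> P2" "card {z. Q2 e2 z} \<le> 1"
    and y: "y \<in> X2" and dP: "P1 \<inter> P2 = {}" and dX: "X1 \<inter> X2 = {}"
  shows "path_decomp (X1 \<union> X2) (edge_join Y1 Y2 x y) (P1 \<union> P2) (edge_join Q1 Q2 e1 e2)
    (\<lambda>z. if z \<in> P1 then C1 z else insert x (C2 z)) (Suc k)"
proof -
  let ?E = "edge_join Y1 Y2 x y"
  have td1: "tree_decomp X1 Y1 P1 Q1 C1" and td2: "tree_decomp X2 Y2 P2 Q2 C2"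
    using pd1 pd2 unfolding path_decomp_def by blast+
  have xX1: "x \<in> X1" using td1 e1 x unfolding tree_decomp_def by blast
  have sep: "separation (X1 \<union> X2) ?E X1 (insert x X2) x"
    using xX1 dX tree_decomp_edgeD[OF td1] tree_decomp_edgeD[OF td2] y
    unfolding separation_def edge_join_def by blast
  have "tree_decomp X1 (induced ?E X1) P1 Q1 C1"
    by (rule tree_decomp_mono[OF td1])
      (use dX y tree_decomp_edgeD[OF td2] in \<open>auto simp: induced_def edge_join_def\<close>)
  moreover have "tree_decomp (insert x X2) (induced ?E (insert x X2)) P2 Q2 (\<lambda>z. insert x (C2 z))"
    by (rule tree_decomp_insert[OF td2])
      (use xX1 dX tree_decomp_edgeD[OF td1] in \<open>auto simp: induced_def edge_join_def\<close>)
  ultimately have "tree_decomp (X1 \<union> X2) ?E (P1 \<union> P2) (edge_join Q1 Q2 e1 e2)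
      (\<lambda>z. if z \<in> P1 then C1 z else insert x (C2 z))"
    using tree_decomp_edge_join[OF sep _ _ dP e1(1) e2(1)] x by blast
  moreover have "is_path (P1 \<union> P2) (edge_join Q1 Q2 e1 e2)"
    using pd1 pd2 is_path_edge_join[of P1 Q1 P2 Q2 e1 e2] dP e1 e2 unfolding path_decomp_def by blast
  moreover have "width_le (P1 \<union> P2) (\<lambda>z. if z \<in> P1 then C1 z else insert x (C2 z)) (Suc k)"
    using pd1 pd2 unfolding path_decomp_def width_le_def by (auto intro!: card_insert_le_m1)
  ultimately show ?thesis unfolding path_decomp_def by blast
qed

lemma nat_embeddings_disjoint:
  obtains f g :: "nat \<Rightarrow> nat" where "inj f" "inj g" "range f \<inter> range g = {}"
proof
  show "inj (\<lambda>n::nat. 2 * n)" "inj (\<lambda>n::nat. 2 * n + 1)" by (auto intro: injI)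
  show "range (\<lambda>n::nat. 2 * n) \<inter> range (\<lambda>n. 2 * n + 1) = {}" by auto presburger
qed

lemma pw_le_edge_join:
  assumes pw1: "pw_le X1 Y1 (Suc k)" and pw2: "pw_le X2 Y2 k" and ne: "X1 \<noteq> {}"
    and dX: "X1 \<inter> X2 = {}" and y: "y \<in> X2"
  shows "\<exists>x\<in>X1. pw_le (X1 \<union> X2) (edge_join Y1 Y2 x y) (Suc k)"
proof -
  obtain P0 :: "nat set" and Q0 C0 where "path_decomp X1 Y1 P0 Q0 C0 (Suc k)"
    using pw1 unfolding pw_le_iff by blast
  then obtain P1 :: "nat set" and Q1 C1 e1 where pd1: "path_decomp X1 Y1 P1 Q1 C1 (Suc k)"
    and e1: "e1 \<in> P1" "card {z. Q1 e1 z} \<le> 1" "C1 e1 \<noteq> {}"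
    using path_decomp_nonempty_end[OF _ ne] by blast
  obtain P2 :: "nat set" and Q2 C2 where pd2: "path_decomp X2 Y2 P2 Q2 C2 k"
    using pw2 unfolding pw_le_iff by blast
  obtain e2 where e2: "e2 \<in> P2" "card {z. Q2 e2 z} \<le> 1"
    using path_has_endpoint pd2 unfolding path_decomp_def by blast
  obtain x where x: "x \<in> C1 e1" using e1(3) by blast
  have xX1: "x \<in> X1" using pd1 e1 x unfolding path_decomp_def tree_decomp_def by blast
  obtain f g :: "nat \<Rightarrow> nat" where f: "inj f" and g: "inj g" and fg: "range f \<inter> range g = {}"
    by (rule nat_embeddings_disjoint)
  have i1: "inj_on f P1" and i2: "inj_on g P2" using f g by (metis inj_on_subset subset_UNIV)+
  have pd1': "path_decomp X1 Y1 (f ` P1) (rel_image f P1 Q1) (C1 \<circ> inv_into P1 f) (Suc k)"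
    by (rule path_decomp_rel_image[OF pd1 i1])
  have pd2': "path_decomp X2 Y2 (g ` P2) (rel_image g P2 Q2) (C2 \<circ> inv_into P2 g) k"
    by (rule path_decomp_rel_image[OF pd2 i2])
  have "card {z. rel_image f P1 Q1 (f e1) z} \<le> 1" "card {z. rel_image g P2 Q2 (g e2) z} \<le> 1"
    using card_rel_image_neighbours[OF i1 e1(1) is_pathD(2)] card_rel_image_neighbours[OF i2 e2(1) is_pathD(2)]
      pd1 pd2 e1(2) e2(2) unfolding path_decomp_def by auto
  moreover have "x \<in> (C1 \<circ> inv_into P1 f) (f e1)" using x e1(1) i1 by simp
  moreover have "f ` P1 \<inter> g ` P2 = {}" using fg by blast
  ultimately have "pw_le (X1 \<union> X2) (edge_join Y1 Y2 x y) (Suc k)"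
    using path_decomp_edge_join[OF pd1' _ _ _ pd2' _ _ y _ dX] e1(1) e2(1) unfolding pw_le_iff by blast
  then show ?thesis using xX1 by blast
qed

lemma pw_le_rel_image:
  assumes pw: "pw_le X R k" and inj: "inj_on f X"
  shows "pw_le (f ` X) (rel_image f X R) k"
proof -
  obtain P :: "nat set" and Q C where pd: "path_decomp X R P Q C k"
    using pw unfolding pw_le_iff by blast
  have Csub: "C i \<subseteq> X" if "i \<in> P" for i using pd that unfolding path_decomp_def tree_decomp_def by blast
  have bn: "bag_nodes P (\<lambda>i. f ` C i) (f v) = bag_nodes P C v" if "v \<in> X" for v
    using Csub inj that unfolding bag_nodes_def inj_on_def by blast
  have "tree_decomp (f ` X) (rel_image f X R) P Q (\<lambda>i. f ` C i)"
    unfolding tree_decomp_def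
  proof (intro conjI ballI allI impI)
    show "is_tree P Q" using pd unfolding path_decomp_def tree_decomp_def by blast
    show "f ` C i \<subseteq> f ` X" if "i \<in> P" for i using Csub that by blast
    show "\<exists>i\<in>P. u \<in> f ` C i \<and> v \<in> f ` C i" if uv: "rel_image f X R u v" for u v
    proof -
      obtain s t where "u = f s" "v = f t" "R s t" using uv unfolding rel_image_def by blast
      then show ?thesis using pd unfolding path_decomp_def tree_decomp_def by blast
    qed
    fix a assume "a \<in> f ` X"
    then show "bag_nodes P (\<lambda>i. f ` C i) a \<noteq> {}"
      and "connected_graph (bag_nodes P (\<lambda>i. f ` C i) a) (induced Q (bag_nodes P (\<lambda>i. f ` C i) a))"
      using pd bn unfolding path_decomp_def tree_decomp_def by auto
  qed
  moreover have "width_le P (\<lambda>i. f ` C i) k"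
    using pd Csub inj unfolding path_decomp_def width_le_def by (metis card_image inj_on_subset)
  ultimately show ?thesis using pd unfolding pw_le_iff path_decomp_def by blast
qed

section \<open>Good tree decompositions\<close>

definition subtree_pw_le :: "'b set \<Rightarrow> ('b \<Rightarrow> 'b \<Rightarrow> bool) \<Rightarrow> ('b \<Rightarrow> 'a set) \<Rightarrow> 'a \<Rightarrow> nat \<Rightarrow> bool" where
  "subtree_pw_le N F B v k \<longleftrightarrow> pw_le (bag_nodes N B v) (induced F (bag_nodes N B v)) k"

lemma good_decomp_iff:
  "good_decomp V E w p N F B \<longleftrightarrow>
     tree_decomp V E N F B \<and> width_le N B w \<and> (\<forall>v\<in>V. subtree_pw_le N F B v p)"
  unfolding good_decomp_def subtree_pw_le_def by blast

lemma good_decomp_empty: "is_graph {} E \<Longrightarrow> good_decomp {} E w q {0::nat} (\<lambda>_ _. False) (\<lambda>_. {})"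
  unfolding good_decomp_def tree_decomp_def width_le_def is_tree_def is_graph_def connected_graph_def
  by auto

lemma good_decomp_Suc: "good_decomp V E w p N F B \<Longrightarrow> good_decomp V E w (Suc p) N F B"
  unfolding good_decomp_def using pw_le_Suc by blast

lemma subtree_pw_le_rel_image:
  assumes inj: "inj_on f N" and pw: "subtree_pw_le N F B v k"
  shows "subtree_pw_le (f ` N) (rel_image f N F) (B \<circ> inv_into N f) v k"
proof -
  have "pw_le (f ` bag_nodes N B v) (rel_image f (bag_nodes N B v) (induced F (bag_nodes N B v))) k"
    using pw_le_rel_image[OF _ inj_on_subset[OF inj bag_nodes_subset]] pw unfolding subtree_pw_le_def .
  then show ?thesis
    unfolding subtree_pw_le_def bag_nodes_rel_image[OF inj] induced_rel_image[OF inj bag_nodes_subset] .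
qed

lemma good_decomp_rel_image:
  assumes g: "good_decomp V E w q N F B" and inj: "inj_on f N"
  shows "good_decomp V E w q (f ` N) (rel_image f N F) (B \<circ> inv_into N f)"
proof -
  have td: "tree_decomp V E N F B" and wd: "width_le N B w" and pw: "\<forall>v\<in>V. subtree_pw_le N F B v q"
    using g unfolding good_decomp_iff by blast+
  show ?thesis
    unfolding good_decomp_iff
    using tree_decomp_rel_image[OF td inj] width_le_rel_image[OF wd inj] subtree_pw_le_rel_image[OF inj, of F B] pw
    by blast
qed

lemma subtree_pw_le_edge_join_left:
  assumes td2: "tree_decomp C E2 N2 F2 B2" and d: "N1 \<inter> N2 = {}" and y: "y \<in> N2" and v: "v \<notin> C"
  shows "subtree_pw_le (N1 \<union> N2) (edge_join F1 F2 x y) (\<lambda>z. if z \<in> N1 then B1 z else B2 z) v k \<longleftrightarrow>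
    subtree_pw_le N1 F1 B1 v k"
proof -
  have "is_graph N2 F2" using td2 is_treeD(1)[of N2 F2] unfolding tree_decomp_def by blast
  then have "induced (edge_join F1 F2 x y) (bag_nodes N1 B1 v) = induced F1 (bag_nodes N1 B1 v)"
    using bag_nodes_subset[of N1 B1 v] d y is_graph_edgeD[of N2 F2] unfolding induced_def edge_join_def
    by (auto intro!: ext)
  then show ?thesis using bag_nodes_empty[OF td2 v] unfolding subtree_pw_le_def bag_nodes_if[OF d] by simp
qed

lemma subtree_pw_le_edge_join_right:
  assumes td1: "tree_decomp A E1 N1 F1 B1" and d: "N1 \<inter> N2 = {}" and x: "x \<in> N1" and v: "v \<notin> A"
  shows "subtree_pw_le (N1 \<union> N2) (edge_join F1 F2 x y) (\<lambda>z. if z \<in> N1 then B1 z else B2 z) v k \<longleftrightarrow>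
    subtree_pw_le N2 F2 B2 v k"
proof -
  have "is_graph N1 F1" using td1 is_treeD(1)[of N1 F1] unfolding tree_decomp_def by blast
  then have "induced (edge_join F1 F2 x y) (bag_nodes N2 B2 v) = induced F2 (bag_nodes N2 B2 v)"
    using bag_nodes_subset[of N2 B2 v] d x is_graph_edgeD[of N1 F1] unfolding induced_def edge_join_def
    by (auto intro!: ext)
  then show ?thesis using bag_nodes_empty[OF td1 v] unfolding subtree_pw_le_def bag_nodes_if[OF d] by simp
qed

lemma subtree_pw_le_edge_join_Un:
  assumes g1: "is_graph N1 F1" and g2: "is_graph N2 F2" and d: "N1 \<inter> N2 = {}"
    and pw: "pw_le (bag_nodes N1 B1 v \<union> bag_nodes N2 B2 v)
      (edge_join (induced F1 (bag_nodes N1 B1 v)) (induced F2 (bag_nodes N2 B2 v)) x y) k"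
  shows "subtree_pw_le (N1 \<union> N2) (edge_join F1 F2 x y) (\<lambda>z. if z \<in> N1 then B1 z else B2 z) v k"
  unfolding subtree_pw_le_def bag_nodes_if[OF d]
proof (rule pw_le_mono[OF pw])
  fix a b assume "induced (edge_join F1 F2 x y) (bag_nodes N1 B1 v \<union> bag_nodes N2 B2 v) a b"
  then show "edge_join (induced F1 (bag_nodes N1 B1 v)) (induced F2 (bag_nodes N2 B2 v)) x y a b"
    using is_graph_edgeD[OF g1] is_graph_edgeD[OF g2] d bag_nodes_subset[of N1 B1 v] bag_nodes_subset[of N2 B2 v]
    unfolding induced_def edge_join_def by blast
qed

text \<open>The nodes to be linked: T[c] keeps pathwidth at most p + 1 because c has pathwidth at most p
  on the second side.\<close>

lemma good_decomp_link:
  assumes g1: "good_decomp A E1 w (Suc p) N1 F1 B1" and g2: "good_decomp C E2 w (Suc p) N2 F2 B2"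
    and d: "N1 \<inter> N2 = {}" and c: "c \<in> A \<inter> C \<Longrightarrow> subtree_pw_le N2 F2 B2 c p"
  obtains x y where "x \<in> N1" "y \<in> N2"
    and "c \<in> A \<inter> C \<Longrightarrow> c \<in> B1 x \<and> c \<in> B2 y \<and>
      pw_le (bag_nodes N1 B1 c \<union> bag_nodes N2 B2 c)
        (edge_join (induced F1 (bag_nodes N1 B1 c)) (induced F2 (bag_nodes N2 B2 c)) x y) (Suc p)"
proof (cases "c \<in> A \<inter> C")
  case True
  let ?X1 = "bag_nodes N1 B1 c" and ?X2 = "bag_nodes N2 B2 c"
  have ne: "?X1 \<noteq> {}" and pw1: "pw_le ?X1 (induced F1 ?X1) (Suc p)"
    using g1 True unfolding good_decomp_def tree_decomp_def by blast+
  obtain y where y: "y \<in> ?X2" using g2 True unfolding good_decomp_def tree_decomp_def by blast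
  have "?X1 \<inter> ?X2 = {}" using d bag_nodes_subset[of N1 B1 c] bag_nodes_subset[of N2 B2 c] by blast
  then obtain x where "x \<in> ?X1"
    and "pw_le (?X1 \<union> ?X2) (edge_join (induced F1 ?X1) (induced F2 ?X2) x y) (Suc p)"
    using pw_le_edge_join[OF pw1 _ ne _ y] c[OF True] unfolding subtree_pw_le_def by blast
  then show ?thesis using that y unfolding bag_nodes_def by blast
next
  case False
  have "is_tree N1 F1" "is_tree N2 F2" using g1 g2 unfolding good_decomp_def tree_decomp_def by blast+
  then obtain x y where "x \<in> N1" "y \<in> N2" using is_treeD(2) by blast
  then show ?thesis using that False by blast
qed

lemma good_decomp_edge_join:
  assumes sep: "separation V E A C c"
    and g1: "good_decomp A (induced E A) w (Suc p) N1 F1 B1"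
    and g2: "good_decomp C (induced E C) w (Suc p) N2 F2 B2"
    and d: "N1 \<inter> N2 = {}" and c: "c \<in> A \<inter> C \<Longrightarrow> subtree_pw_le N2 F2 B2 c p"
  obtains F B where "good_decomp V E w (Suc p) (N1 \<union> N2) F B"
    and "\<And>v k. v \<in> A - C \<Longrightarrow> subtree_pw_le N1 F1 B1 v k \<Longrightarrow> subtree_pw_le (N1 \<union> N2) F B v k"
proof -
  have td1: "tree_decomp A (induced E A) N1 F1 B1" and td2: "tree_decomp C (induced E C) N2 F2 B2"
    using g1 g2 unfolding good_decomp_def by blast+
  have gr1: "is_graph N1 F1" and gr2: "is_graph N2 F2"
    using td1 td2 is_treeD(1)[of N1 F1] is_treeD(1)[of N2 F2] unfolding tree_decomp_def by blast+
  obtain x y where x: "x \<in> N1" and y: "y \<in> N2"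
    and link: "c \<in> A \<inter> C \<Longrightarrow> c \<in> B1 x \<and> c \<in> B2 y \<and>
      pw_le (bag_nodes N1 B1 c \<union> bag_nodes N2 B2 c)
        (edge_join (induced F1 (bag_nodes N1 B1 c)) (induced F2 (bag_nodes N2 B2 c)) x y) (Suc p)"
    using good_decomp_link[OF g1 g2 d c] by blast
  let ?F = "edge_join F1 F2 x y" and ?B = "\<lambda>z. if z \<in> N1 then B1 z else B2 z"
  have "subtree_pw_le (N1 \<union> N2) ?F ?B v (Suc p)" if v: "v \<in> V" for v
  proof -
    consider "v \<in> A \<inter> C" | "v \<in> A" "v \<notin> C" | "v \<in> C" "v \<notin> A"
      using v sep unfolding separation_def by blast
    then show ?thesis
    proof cases
      case 1
      then have "v = c" using sep unfolding separation_def by blast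
      then have "pw_le (bag_nodes N1 B1 v \<union> bag_nodes N2 B2 v)
          (edge_join (induced F1 (bag_nodes N1 B1 v)) (induced F2 (bag_nodes N2 B2 v)) x y) (Suc p)"
        using link 1 by simp
      then show ?thesis by (rule subtree_pw_le_edge_join_Un[OF gr1 gr2 d])
    next
      case 2
      then show ?thesis using subtree_pw_le_edge_join_left[OF td2 d y] g1 unfolding good_decomp_iff by blast
    next
      case 3
      then show ?thesis using subtree_pw_le_edge_join_right[OF td1 d x] g2 unfolding good_decomp_iff by blast
    qed
  qed
  moreover have "tree_decomp V E (N1 \<union> N2) ?F ?B"
    by (rule tree_decomp_edge_join[OF sep td1 td2 d x y]) (use link in blast)
  moreover have "width_le (N1 \<union> N2) ?B w"
    using g1 g2 unfolding good_decomp_def width_le_def by auto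
  ultimately have "good_decomp V E w (Suc p) (N1 \<union> N2) ?F ?B" unfolding good_decomp_iff by blast
  then show ?thesis by (rule that) (use subtree_pw_le_edge_join_left[OF td2 d y] in blast)
qed

lemma good_decomp_separation:
  fixes N1 N2 :: "nat set"
  assumes sep: "separation V E A C c"
    and g1: "good_decomp A (induced E A) w (Suc p) N1 F1 B1"
    and g2: "good_decomp C (induced E C) w (Suc p) N2 F2 B2"
    and c: "c \<in> A \<inter> C \<Longrightarrow> subtree_pw_le N2 F2 B2 c p"
  obtains N :: "nat set" and F B where "good_decomp V E w (Suc p) N F B"
    and "\<And>v. v \<in> A - C \<Longrightarrow> subtree_pw_le N1 F1 B1 v p \<Longrightarrow> subtree_pw_le N F B v p"
proof -
  obtain f g :: "nat \<Rightarrow> nat" where f: "inj f" and g: "inj g" and fg: "range f \<inter> range g = {}"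
    by (rule nat_embeddings_disjoint)
  have i1: "inj_on f N1" and i2: "inj_on g N2" using f g by (metis inj_on_subset subset_UNIV)+
  have c': "subtree_pw_le (g ` N2) (rel_image g N2 F2) (B2 \<circ> inv_into N2 g) c p" if "c \<in> A \<inter> C"
    using subtree_pw_le_rel_image[OF i2 c[OF that]] .
  have d: "f ` N1 \<inter> g ` N2 = {}" using fg by blast
  obtain F B where "good_decomp V E w (Suc p) (f ` N1 \<union> g ` N2) F B"
    and "\<And>v k. v \<in> A - C \<Longrightarrow> subtree_pw_le (f ` N1) (rel_image f N1 F1) (B1 \<circ> inv_into N1 f) v k \<Longrightarrow>
      subtree_pw_le (f ` N1 \<union> g ` N2) F B v k"
    using good_decomp_edge_join[OF sep good_decomp_rel_image[OF g1 i1] good_decomp_rel_image[OF g2 i2] d c']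
    by blast
  then show ?thesis using that subtree_pw_le_rel_image[OF i1, of F1 B1] by blast
qed

section \<open>Blocks and separations\<close>

lemma connected_two_connected_Diff:
  assumes "two_connected S (induced E S)" "X \<subseteq> {c}"
  shows "connected_graph (S - X) E"
proof (cases "c \<in> X \<inter> S")
  case True
  then have "S - X = S - {c}" using assms(2) by blast
  then show ?thesis using assms(1) True unfolding two_connected_def by auto
next
  case False
  then have "S - X = S" using assms(2) by blast
  then show ?thesis using assms(1) unfolding two_connected_def by simp
qed

lemma two_connected_separation_subset:
  assumes sep: "separation V E A C c" and S: "S \<subseteq> A" "two_connected S (induced E S)"
    and S': "S \<subseteq> S'" "two_connected S' (induced E S')"
  shows "S' \<subseteq> A"
proof -
  have "\<not> S \<subseteq> A \<inter> C"
  proof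
    assume "S \<subseteq> A \<inter> C"
    then have "card S \<le> card {c}" using sep unfolding separation_def by (meson card_mono finite.intros subset_trans)
    then show False using S(2) unfolding two_connected_def by simp
  qed
  then obtain s where s: "s \<in> S" "s \<notin> A \<inter> C" by blast
  have "A \<inter> C \<subseteq> {c}" using sep unfolding separation_def by blast
  then have "connected_graph (S' - (A \<inter> C)) E" by (rule connected_two_connected_Diff[OF S'(2)])
  then have "S' - (A \<inter> C) \<subseteq> A"
    by (rule connected_graph_separation_subset[OF sep _ _ _]) (use s S S' in auto)
  then show ?thesis by blast
qed

lemma not_connected_del_edge_separation:
  assumes sep: "separation V E A C c" and u: "u \<in> A"
    and bridge: "\<not> connected_graph A (del_edge (induced E A) u v)"
  shows "\<not> connected_graph V (del_edge E u v)"
proof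
  assume conn: "connected_graph V (del_edge E u v)"
  define c' where "c' = (if A \<inter> C = {} then u else c)"
  have "separation V E A C c'" "c' \<in> A"
    using sep u separation_disjoint[OF sep] unfolding c'_def separation_def by auto
  then have "connected_graph A (del_edge E u v)"
    using connected_graph_separation[OF conn] separation_mono[of V E A C c' "del_edge E u v"]
    unfolding del_edge_def by blast
  then have "connected_graph A (del_edge (induced E A) u v)"
    by (rule connected_graph_mono) (simp add: del_edge_def induced_def)
  then show False using bridge by blast
qed

lemma is_block_separation:
  assumes sep: "separation V E A C c" and nbr: "c \<in> A \<inter> C \<Longrightarrow> \<exists>u\<in>A. E c u"
    and blk: "is_block A (induced E A) S"
  shows "is_block V E S"
proof -
  have SA: "S \<subseteq> A" using blk unfolding is_block_def by blast
  have SV: "S \<subseteq> V" using SA sep unfolding separation_def by blast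
  consider (two_conn) "two_connected S (induced E S)"
      "\<forall>S'. S \<subset> S' \<and> S' \<subseteq> A \<longrightarrow> \<not> two_connected S' (induced E S')"
    | (bridge) u v where "S = {u, v}" "induced E A u v" "\<not> connected_graph A (del_edge (induced E A) u v)"
    | (isolated) v where "S = {v}" "\<forall>u. \<not> induced E A v u"
    using blk SA unfolding is_block_def by auto
  then show ?thesis
  proof cases
    case two_conn
    then have "\<not> two_connected S' (induced E S')" if "S \<subset> S'" "S' \<subseteq> V" for S'
      using two_connected_separation_subset[OF sep SA two_conn(1), of S'] that by blast
    then show ?thesis unfolding is_block_def using SV two_conn(1) by blast
  next
    case bridge
    have "u \<in> A" using bridge(1) SA by blast
    then have "\<not> connected_graph V (del_edge E u v)"
      by (rule not_connected_del_edge_separation[OF sep _ bridge(3)])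
    then show ?thesis unfolding is_block_def using SV bridge(1,2) by (auto simp: induced_def)
  next
    case isolated
    have "\<not> E v u" for u
    proof
      assume e: "E v u"
      have "v \<in> A" using isolated(1) SA by blast
      then have "v \<in> C" using e isolated(2) sep unfolding separation_def induced_def by blast
      then show False using nbr \<open>v \<in> A\<close> isolated(2) sep unfolding separation_def induced_def by blast
    qed
    then show ?thesis unfolding is_block_def using SV isolated(1) by blast
  qed
qed

lemma has_good_decomp_blocks_separation:
  assumes hyp: "\<forall>S. is_block V E S \<longrightarrow> has_good_decomp S (induced E S) w p"
    and sep: "separation V E A C c" and nbr: "c \<in> A \<inter> C \<Longrightarrow> \<exists>u\<in>A. E c u"
  shows "\<forall>S. is_block A (induced E A) S \<longrightarrow> has_good_decomp S (induced (induced E A) S) w p"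
proof (intro allI impI)
  fix S assume blk: "is_block A (induced E A) S"
  then have "S \<subseteq> A" unfolding is_block_def by blast
  then show "has_good_decomp S (induced (induced E A) S) w p"
    using hyp is_block_separation[OF sep nbr blk] by simp
qed

lemma is_block_self:
  assumes g: "is_graph V E" and ne: "V \<noteq> {}" and conn: "connected_graph V E"
    and no_cut: "\<forall>x\<in>V. connected_graph (V - {x}) (induced E (V - {x}))"
  shows "is_block V E V"
proof -
  have "card V \<noteq> 0" using ne g unfolding is_graph_def by simp
  then consider "card V \<ge> 3" | "card V = 2" | "card V = 1" by linarith
  then show ?thesis
  proof cases
    case 1
    then show ?thesis unfolding is_block_def two_connected_def using conn no_cut by auto
  next
    case 2
    then obtain a b where ab: "V = {a, b}" "a \<noteq> b" by (meson card_2_iff)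
    obtain t where "E a t" using connected_graph_neighbour[OF conn, of a b] ab by blast
    then have Eab: "E a b" using is_graph_edgeD[OF g] ab by blast
    have "\<not> connected_graph V (del_edge E a b)"
    proof
      assume "connected_graph V (del_edge E a b)"
      then obtain t where "del_edge E a b a t" using connected_graph_neighbour[of V _ a b] ab by blast
      then show False using is_graph_edgeD[OF g, of a t] ab unfolding del_edge_def by auto
    qed
    then show ?thesis unfolding is_block_def using ab Eab by blast
  next
    case 3
    then obtain v where v: "V = {v}" by (meson card_1_singletonE)
    then have "\<not> E v u" for u using is_graph_edgeD[OF g, of v u] by auto
    then show ?thesis unfolding is_block_def using v by blast
  qed
qed

lemma separation_component:
  assumes g: "is_graph V E" and c: "c \<in> V" and X: "X \<subseteq> {c}"
  shows "separation V E (V - component (V - X) E k) (insert c (component (V - X) E k)) c"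
proof -
  let ?K = "component (V - X) E k"
  have KV: "?K \<subseteq> V" using component_subset[of "V - X" E k] by blast
  have closed: "b \<in> insert c ?K" if "a \<in> ?K" "E a b" for a b
  proof (cases "b \<in> X")
    case False
    then have "b \<in> V - X" using is_graph_edgeD[OF g that(2)] by blast
    then show ?thesis using component_closed[OF that] by blast
  qed (use X in blast)
  have "a \<in> V - ?K \<and> b \<in> V - ?K \<or> a \<in> insert c ?K \<and> b \<in> insert c ?K" if e: "E a b" for a b
  proof -
    have "a \<in> V" "b \<in> V" "E b a" using is_graph_edgeD[OF g e] by blast+
    then show ?thesis using closed[OF _ e] closed[of b a] by blast
  qed
  then show ?thesis unfolding separation_def using c KV by blast
qed

text \<open>Since R has at most one element, one of two non-adjacent components misses it.\<close>

lemma component_avoiding: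
  assumes sym: "symp E" and xy: "x \<in> W" "y \<in> W" "\<not> (induced E W)\<^sup>*\<^sup>* x y"
    and R: "card R \<le> 1" "finite R"
  obtains k z where "k \<in> W" "z \<in> W" "z \<notin> component W E k" "component W E k \<inter> R = {}"
proof -
  have dj: "component W E x \<inter> component W E y = {}" by (rule component_disjoint[OF sym xy(3)])
  have "x \<in> component W E x" "y \<in> component W E y" using xy(1,2) by (simp_all add: self_in_component)
  then have "x \<notin> component W E y" "y \<notin> component W E x" using dj by blast+
  moreover have "component W E x \<inter> R = {} \<or> component W E y \<inter> R = {}"
  proof (rule ccontr)
    assume "\<not> ?thesis"
    then obtain a b where ab: "a \<in> component W E x" "b \<in> component W E y" "a \<in> R" "b \<in> R"
      by blast
    then have "a = b" using R card_le_Suc0_iff_eq[of R] by simp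
    then show False using ab(1,2) dj by blast
  qed
  ultimately show ?thesis using that[of x y] that[of y x] xy(1,2) by blast
qed

section \<open>The induction\<close>

definition non_cut_vertex :: "'a set \<Rightarrow> ('a \<Rightarrow> 'a \<Rightarrow> bool) \<Rightarrow> 'a \<Rightarrow> bool" where
  "non_cut_vertex V E r \<longleftrightarrow> r \<in> V \<and> connected_graph V E \<and> connected_graph (V - {r}) (induced E (V - {r}))"

lemma non_cut_vertex_separation:
  assumes r: "non_cut_vertex V E r" and sep: "separation V E A C c" and rA: "r \<in> A - C"
    and c: "c \<in> A \<inter> C"
  shows "non_cut_vertex A (induced E A) r"
proof -
  have sep': "separation (V - {r}) (induced E (V - {r})) (A - {r}) C c"
    using sep rA unfolding separation_def induced_def by blast
  have conn': "connected_graph (V - {r}) (induced E (V - {r}))" and conn: "connected_graph V E"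
    using r unfolding non_cut_vertex_def by blast+
  have "c \<in> A - {r}" using rA c by blast
  then have "connected_graph (A - {r}) (induced E (V - {r}))"
    by (rule connected_graph_separation[OF conn' sep'])
  then have "connected_graph (A - {r}) E"
    by (rule connected_graph_mono) (simp add: induced_def)
  moreover have "connected_graph A E" using c by (intro connected_graph_separation[OF conn sep]) blast
  ultimately show ?thesis using rA unfolding non_cut_vertex_def by simp
qed

text \<open>The common vertex c becomes the root of the C-side; its neighbours on both sides prevent {c}
  from being an isolated-vertex block of either side.\<close>

definition admissible_separation ::
  "'a set \<Rightarrow> ('a \<Rightarrow> 'a \<Rightarrow> bool) \<Rightarrow> 'a set \<Rightarrow> 'a set \<Rightarrow> 'a set \<Rightarrow> 'a \<Rightarrow> bool" where
  "admissible_separation V E R A C c \<longleftrightarrow> separation V E A C c \<and> A \<subset> V \<and> C \<subset> V \<and> R \<subseteq> A - C \<and>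
     (\<forall>r\<in>R. non_cut_vertex A (induced E A) r) \<and>
     (\<forall>r\<in>A \<inter> C. (\<exists>u\<in>A. E r u) \<and> (\<exists>u\<in>C. E r u) \<and> non_cut_vertex C (induced E C) r)"

lemma admissible_separation_disconnected:
  assumes g: "is_graph V E" and x: "x \<in> V" and disc: "\<not> connected_graph V E"
  shows "admissible_separation V E {} (V - component V E x) (component V E x) x"
proof -
  have xK: "x \<in> component V E x" by (rule self_in_component[OF x])
  have "separation V E (V - component V E x) (component V E x) x"
    using separation_component[OF g x, of "{}" x] xK by (simp add: insert_absorb)
  moreover have "component V E x \<noteq> V"
    using connected_component[OF is_graph_symp[OF g], of V x] disc by auto
  ultimately show ?thesis
    unfolding admissible_separation_def using xK component_subset[of V E x] by blast
qed

lemma admissible_separation_cut_vertex: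
  assumes g: "is_graph V E" and conn: "connected_graph V E"
    and c: "c \<in> V" "\<not> connected_graph (V - {c}) (induced E (V - {c}))"
    and R: "card R \<le> 1" "\<forall>r\<in>R. non_cut_vertex V E r"
  shows "\<exists>A C. admissible_separation V E R A C c"
proof -
  have sym: "symp E" by (rule is_graph_symp[OF g])
  have RV: "R \<subseteq> V" and cR: "c \<notin> R" using R(2) c(2) unfolding non_cut_vertex_def by blast+
  then have fin: "finite R" using g finite_subset unfolding is_graph_def by blast
  obtain x y where xy: "x \<in> V - {c}" "y \<in> V - {c}" "\<not> (induced E (V - {c}))\<^sup>*\<^sup>* x y"
    using c(2) unfolding connected_graph_def by auto
  obtain k z where k: "k \<in> V - {c}" and z: "z \<in> V - {c}" "z \<notin> component (V - {c}) E k"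
    and KR: "component (V - {c}) E k \<inter> R = {}"
    by (rule component_avoiding[OF sym xy R(1) fin])
  define K where "K = component (V - {c}) E k"
  define A where "A = V - K"
  define C where "C = insert c K"
  have KV: "K \<subseteq> V - {c}" unfolding K_def by (rule component_subset)
  have kK: "k \<in> K" unfolding K_def by (rule self_in_component[OF k])
  have sep: "separation V E A C c" unfolding A_def C_def K_def by (rule separation_component[OF g c(1)]) simp
  have AC: "A \<inter> C = {c}" "c \<in> A" "c \<in> C" using KV c(1) unfolding A_def C_def by auto
  have RAC: "R \<subseteq> A - C" using RV cR KR unfolding A_def C_def K_def by blast
  have connA: "connected_graph A E" by (rule connected_graph_separation[OF conn sep AC(2)])
  have connC: "connected_graph C E"
    by (rule connected_graph_separation[OF conn separation_commute[THEN iffD1, OF sep] AC(3)])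
  have "z \<in> A" "z \<noteq> c" using z unfolding A_def K_def by auto
  then obtain u where u: "u \<in> A" "E c u" using connected_graph_neighbour[OF connA AC(2)] by metis
  have "k \<noteq> c" "k \<in> C" using k kK unfolding C_def by auto
  then obtain u' where u': "u' \<in> C" "E c u'" using connected_graph_neighbour[OF connC AC(3)] by metis
  have "C - {c} = K" "K \<subseteq> C" using KV unfolding C_def by blast+
  moreover have "connected_graph K E" unfolding K_def by (rule connected_component[OF sym])
  ultimately have "non_cut_vertex C (induced E C) c"
    using connC AC(3) unfolding non_cut_vertex_def by simp
  then have rootC: "\<forall>r\<in>A \<inter> C. (\<exists>u\<in>A. E r u) \<and> (\<exists>u\<in>C. E r u) \<and> non_cut_vertex C (induced E C) r"
    unfolding AC(1) using u u' by blast
  have rootsA: "\<forall>r\<in>R. non_cut_vertex A (induced E A) r"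
  proof
    fix r assume r: "r \<in> R"
    show "non_cut_vertex A (induced E A) r"
    proof (rule non_cut_vertex_separation[OF _ sep])
      show "non_cut_vertex V E r" "r \<in> A - C" "c \<in> A \<inter> C" using R(2) r RAC AC by auto
    qed
  qed
  have "A \<subset> V" "C \<subset> V" using kK KV z c(1) unfolding A_def C_def K_def by auto
  then have "admissible_separation V E R A C c"
    unfolding admissible_separation_def using sep RAC rootsA rootC by blast
  then show ?thesis by blast
qed

lemma block_or_admissible_separation:
  assumes g: "is_graph V E" and ne: "V \<noteq> {}" and R: "card R \<le> 1" "\<forall>r\<in>R. non_cut_vertex V E r"
  shows "is_block V E V \<or> (\<exists>A C c. admissible_separation V E R A C c)"
proof (cases "connected_graph V E")
  case True
  then show ?thesis
    using is_block_self[OF g ne True] admissible_separation_cut_vertex[OF g True _ _ R] by blast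
next
  case False
  then have "R = {}" using R(2) unfolding non_cut_vertex_def by blast
  then show ?thesis using admissible_separation_disconnected[OF g _ False] ne by blast
qed

lemma good_decomp_rooted:
  assumes "is_graph V E" and "\<forall>S. is_block V E S \<longrightarrow> has_good_decomp S (induced E S) w p"
    and "card R \<le> 1" and "\<forall>r\<in>R. non_cut_vertex V E r"
  shows "\<exists>(N::nat set) F B. good_decomp V E w (Suc p) N F B \<and> (\<forall>r\<in>R. subtree_pw_le N F B r p)"
  using assms
proof (induction "card V" arbitrary: V E R rule: less_induct)
  case less
  note g = less.prems(1) and blocks = less.prems(2) and R = less.prems(3,4)
  have RV: "R \<subseteq> V" using R(2) unfolding non_cut_vertex_def by blast
  consider (empty) "V = {}" | (block) "is_block V E V" | (split) A C c where "admissible_separation V E R A C c"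
    using block_or_admissible_separation[OF g _ R] by blast
  then show ?case
  proof cases
    case empty
    then show ?thesis using good_decomp_empty[of E w "Suc p"] g RV by auto
  next
    case block
    then have "has_good_decomp V (induced E V) w p" using blocks by blast
    then obtain N :: "nat set" and F B where "good_decomp V E w p N F B"
      unfolding induced_eq_self[OF g] has_good_decomp_def by blast
    then show ?thesis using good_decomp_Suc RV unfolding good_decomp_iff by blast
  next
    case split
    then have sep: "separation V E A C c" and AC: "A \<subset> V" "C \<subset> V" and RAC: "R \<subseteq> A - C"
      and rootsA: "\<forall>r\<in>R. non_cut_vertex A (induced E A) r"
      and rootsC: "\<forall>r\<in>A \<inter> C. (\<exists>u\<in>A. E r u) \<and> (\<exists>u\<in>C. E r u) \<and> non_cut_vertex C (induced E C) r"
      unfolding admissible_separation_def by blast+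
    have sepC: "separation V E C A c" using sep by (simp only: separation_commute)
    have nbrA: "c \<in> A \<inter> C \<Longrightarrow> \<exists>u\<in>A. E c u" and nbrC: "c \<in> C \<inter> A \<Longrightarrow> \<exists>u\<in>C. E c u"
      and rootC: "\<forall>r\<in>A \<inter> C. non_cut_vertex C (induced E C) r"
      using rootsC by blast+
    have fin: "finite V" using g unfolding is_graph_def by blast
    obtain N2 :: "nat set" and F2 B2 where g2: "good_decomp C (induced E C) w (Suc p) N2 F2 B2"
      and r2: "\<forall>r\<in>A \<inter> C. subtree_pw_le N2 F2 B2 r p"
      using less.hyps[OF psubset_card_mono[OF fin AC(2)] is_graph_induced[OF g psubset_imp_subset[OF AC(2)]]
          has_good_decomp_blocks_separation[OF blocks sepC nbrC] separation_card_Int[OF sep] rootC] by blast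
    obtain N1 :: "nat set" and F1 B1 where g1: "good_decomp A (induced E A) w (Suc p) N1 F1 B1"
      and r1: "\<forall>r\<in>R. subtree_pw_le N1 F1 B1 r p"
      using less.hyps[OF psubset_card_mono[OF fin AC(1)] is_graph_induced[OF g psubset_imp_subset[OF AC(1)]]
          has_good_decomp_blocks_separation[OF blocks sep nbrA] R(1) rootsA] by blast
    obtain N :: "nat set" and F B where "good_decomp V E w (Suc p) N F B"
      and "\<And>v. v \<in> A - C \<Longrightarrow> subtree_pw_le N1 F1 B1 v p \<Longrightarrow> subtree_pw_le N F B v p"
      using good_decomp_separation[OF sep g1 g2] r2 by blast
    then show ?thesis using r1 RAC by blast
  qed
qed

theorem lemma14:
  fixes V :: "'a set" and E :: "'a \<Rightarrow> 'a \<Rightarrow> bool" and w p :: nat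
  assumes "is_graph V E"
    and "\<forall>S. is_block V E S \<longrightarrow> has_good_decomp S (induced E S) w p"
  shows "has_good_decomp V E w (p + 1)"
  using good_decomp_rooted[OF assms, of "{}"] unfolding has_good_decomp_def by auto

end
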